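(* For $n\geq 4$ and $1\leq d\leq n-1$, the set $\Omega_{n,d}$ is connected under switches; that is, any $G\in\Omega_{n,d}$ can be transformed into any $G'\in\Omega_{n,d}$ by a finite sequence of switches, each producing an element of $\Omega_{n,d}$. Equivalently, the switch chain on $\Omega_{n,d}$ is irreducible.
   Context: $\Omega_{n,d}$ is the set of simple digraphs on $[n]$ in which every vertex has in-degree and out-degree $d$. A switch applied to $G$ takes two arcs $(i,j),(k,\ell)$ of $G$ with $|\{i,j,k,\ell\}|=4$ and $(i,\ell),(k,j)\notin A(G)$, and replaces them by $(i,\ell),(k,j)$. *)

theory Defs
  imports Main
begin

text \<open>A digraph on [n] = {1..n} is represented by its arc set.
  Simple: no loops (and, being a set, no multiple arcs).\<close>

definition out_deg :: "(nat \<times> nat) set \<Rightarrow> nat \<Rightarrow> nat" where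
  "out_deg A v = card {w. (v, w) \<in> A}"

definition in_deg :: "(nat \<times> nat) set \<Rightarrow> nat \<Rightarrow> nat" where
  "in_deg A v = card {u. (u, v) \<in> A}"

definition Omega :: "nat \<Rightarrow> nat \<Rightarrow> (nat \<times> nat) set set" where
  "Omega n d = {A. A \<subseteq> {1..n} \<times> {1..n} \<and> (\<forall>v. (v, v) \<notin> A) \<and>
      (\<forall>v\<in>{1..n}. in_deg A v = d \<and> out_deg A v = d)}"

definition switch_step :: "(nat \<times> nat) set \<Rightarrow> (nat \<times> nat) set \<Rightarrow> bool" where
  "switch_step A B \<longleftrightarrow> (\<exists>i j k l. (i, j) \<in> A \<and> (k, l) \<in> A \<and> card {i, j, k, l} = 4 \<and>
      (i, l) \<notin> A \<and> (k, j) \<notin> A \<and>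
      B = (A - {(i, j), (k, l)}) \<union> {(i, l), (k, j)})"

definition switch_in_Omega :: "nat \<Rightarrow> nat \<Rightarrow> (nat \<times> nat) set \<Rightarrow> (nat \<times> nat) set \<Rightarrow> bool" where
  "switch_in_Omega n d A B \<longleftrightarrow> A \<in> Omega n d \<and> B \<in> Omega n d \<and> switch_step A B"

end

theory Submission
  imports Defs
begin

(* Two digraphs G, G' of Omega n d are compared through their symmetric
   difference.  Because both are d-regular, the arcs of G - G' and G' - G can be chained
   into an alternating cycle: arcs r i -> c i of G - G' alternating with arcs
   r (i+1) -> c i of G' - G.  Flipping such a cycle (exchanging its two arc classes)
   keeps the digraph in Omega n d.  A flip of length 2 is a single switch; a longer
   cycle either has a chord r 0 -> c b, which splits its flip into two flips that each
   change fewer arcs, or it is a 3-cycle that is a directed triangle, whose reversal is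
   achieved by three or four switches through a fourth vertex (here n >= 4 is used).
   Hence any two distinct members of Omega n d are joined by switches or admit a third
   member strictly closer to both, and a descent on the size of the symmetric
   difference concludes. *)

section \<open>A descent principle\<close>

lemma rtranclp_by_descent:
  fixes dist :: "'a \<Rightarrow> 'a \<Rightarrow> nat"
  assumes descent: "\<And>x y. x \<in> S \<Longrightarrow> y \<in> S \<Longrightarrow>
      R\<^sup>*\<^sup>* x y \<or> (\<exists>z\<in>S. dist x z < dist x y \<and> dist z y < dist x y)"
  shows "x \<in> S \<Longrightarrow> y \<in> S \<Longrightarrow> R\<^sup>*\<^sup>* x y"
proof (induction "dist x y" arbitrary: x y rule: less_induct)
  case less
  then show ?case using descent[OF less.prems] by (meson rtranclp_trans)
qed

lemma Omega_finite: "G \<in> Omega n d \<Longrightarrow> finite G"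
proof -
  assume "G \<in> Omega n d"
  then have "G \<subseteq> {1..n} \<times> {1..n}" unfolding Omega_def by blast
  then show "finite G" by (rule finite_subset) simp
qed

lemma Omega_nbhds_finite:
  assumes "G \<in> Omega n d"
  shows "finite {w. (v, w) \<in> G}" and "finite {u. (u, v) \<in> G}"
proof -
  have "{w. (v, w) \<in> G} \<subseteq> {1..n}" and "{u. (u, v) \<in> G} \<subseteq> {1..n}"
    using assms unfolding Omega_def by auto
  then show "finite {w. (v, w) \<in> G}" and "finite {u. (u, v) \<in> G}"
    by (auto intro: finite_subset)
qed

lemma Omega_nbhds_card:
  assumes "G \<in> Omega n d" and "v \<in> {1..n}"
  shows "card {w. (v, w) \<in> G} = d" and "card {u. (u, v) \<in> G} = d"
  using assms unfolding Omega_def in_deg_def out_deg_def by auto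

section \<open>Alternating cycles\<close>

definition odd_arcs :: "nat \<Rightarrow> (nat \<Rightarrow> nat) \<Rightarrow> (nat \<Rightarrow> nat) \<Rightarrow> (nat \<times> nat) set" where
  "odd_arcs k r c = (\<lambda>i. (r i, c i)) ` {..<k}"

definition even_arcs :: "nat \<Rightarrow> (nat \<Rightarrow> nat) \<Rightarrow> (nat \<Rightarrow> nat) \<Rightarrow> (nat \<times> nat) set" where
  "even_arcs k r c = (\<lambda>i. (r (Suc i mod k), c i)) ` {..<k}"

definition alt_cycle :: "(nat \<times> nat) set \<Rightarrow> nat \<Rightarrow> (nat \<Rightarrow> nat) \<Rightarrow> (nat \<Rightarrow> nat) \<Rightarrow> bool" where
  "alt_cycle A k r c \<longleftrightarrow> 2 \<le> k \<and> inj_on r {..<k} \<and> inj_on c {..<k} \<and>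
     (\<forall>i<k. (r i, c i) \<in> A \<and> (r (Suc i mod k), c i) \<notin> A \<and> r (Suc i mod k) \<noteq> c i)"

abbreviation flip :: "(nat \<times> nat) set \<Rightarrow> nat \<Rightarrow> (nat \<Rightarrow> nat) \<Rightarrow> (nat \<Rightarrow> nat) \<Rightarrow> (nat \<times> nat) set" where
  "flip A k r c \<equiv> A - odd_arcs k r c \<union> even_arcs k r c"

lemma alt_cycle_arcs:
  assumes "alt_cycle A k r c"
  shows "odd_arcs k r c \<subseteq> A" and "even_arcs k r c \<inter> A = {}"
  using assms unfolding alt_cycle_def odd_arcs_def even_arcs_def by auto

lemma alt_cycle_card_arcs:
  assumes "alt_cycle A k r c"
  shows "card (odd_arcs k r c) = k" and "card (even_arcs k r c) = k"
proof -
  have "inj_on r {..<k}" and "inj_on c {..<k}"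
    using assms unfolding alt_cycle_def by auto
  then show "card (odd_arcs k r c) = k" and "card (even_arcs k r c) = k"
    unfolding odd_arcs_def even_arcs_def
    by (auto simp: card_image inj_on_def)
qed

lemma card_exchange: "finite S \<Longrightarrow> x \<in> S \<Longrightarrow> y \<notin> S \<Longrightarrow> card (S - {x} \<union> {y}) = card S"
  using card_Suc_Diff1[of S x] by simp

lemma cyclic_predecessor:
  assumes "0 < k" and "j < k"
  obtains p where "p < k" and "Suc p mod k = j" and "\<And>i. i < k \<Longrightarrow> Suc i mod k = j \<Longrightarrow> i = p"
proof
  define p where "p = (if j = 0 then k - 1 else j - 1)"
  show "p < k" and "Suc p mod k = j" using assms unfolding p_def by auto
  show "i = p" if "i < k" and "Suc i mod k = j" for i
    using that assms unfolding p_def by (cases "Suc i = k") (auto simp: mod_if split: if_splits)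
qed

text \<open>Flipping an alternating cycle exchanges exactly one in-arc of each column vertex
  \<open>c i\<close> (from \<open>r i\<close> to \<open>r (i+1)\<close>) and leaves all other in-neighbourhoods alone.\<close>
lemma flip_in_nbhd_card:
  assumes cyc: "alt_cycle A k r c" and fin: "finite {u. (u, v) \<in> A}"
  shows "card {u. (u, v) \<in> flip A k r c} = card {u. (u, v) \<in> A}"
proof (cases "\<exists>i<k. c i = v")
  case True
  then obtain i where i: "i < k" "c i = v" by blast
  have ic: "inj_on c {..<k}" and arc: "(r i, c i) \<in> A" "(r (Suc i mod k), c i) \<notin> A"
    using cyc i unfolding alt_cycle_def by auto
  have "(u, v) \<in> odd_arcs k r c \<longleftrightarrow> u = r i" for u
    using i ic unfolding odd_arcs_def inj_on_def by auto
  moreover have "(u, v) \<in> even_arcs k r c \<longleftrightarrow> u = r (Suc i mod k)" for u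
    using i ic unfolding even_arcs_def inj_on_def by auto
  ultimately have "{u. (u, v) \<in> flip A k r c} = {u. (u, v) \<in> A} - {r i} \<union> {r (Suc i mod k)}"
    using arc i by auto
  then show ?thesis
    using card_exchange[OF fin] arc i by simp
next
  case False
  then have "{u. (u, v) \<in> flip A k r c} = {u. (u, v) \<in> A}"
    unfolding odd_arcs_def even_arcs_def by auto
  then show ?thesis by simp
qed

text \<open>Dually, each row vertex \<open>r j\<close> trades its out-arc to \<open>c j\<close> for one to \<open>c p\<close>,
  where \<open>p\<close> is the predecessor of \<open>j\<close> along the cycle.\<close>
lemma flip_out_nbhd_card:
  assumes cyc: "alt_cycle A k r c" and fin: "finite {w. (v, w) \<in> A}"
  shows "card {w. (v, w) \<in> flip A k r c} = card {w. (v, w) \<in> A}"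
proof (cases "\<exists>j<k. r j = v")
  case True
  then obtain j where j: "j < k" "r j = v" by blast
  have k0: "0 < k" and ir: "inj_on r {..<k}" and arcs: "\<And>i. i < k \<Longrightarrow>
      (r i, c i) \<in> A \<and> (r (Suc i mod k), c i) \<notin> A"
    using cyc unfolding alt_cycle_def by auto
  obtain p where p: "p < k" "Suc p mod k = j" and p_unique: "\<And>i. i < k \<Longrightarrow> Suc i mod k = j \<Longrightarrow> i = p"
    using cyclic_predecessor[OF k0 j(1)] by blast
  have "(v, w) \<in> odd_arcs k r c \<longleftrightarrow> w = c j" for w
    using j ir unfolding odd_arcs_def inj_on_def by auto
  moreover have "(v, w) \<in> even_arcs k r c \<longleftrightarrow> w = c p" for w
  proof
    assume "(v, w) \<in> even_arcs k r c"
    then obtain i where i: "i < k" "r (Suc i mod k) = v" "c i = w"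
      unfolding even_arcs_def by auto
    then have "Suc i mod k = j"
      using ir j k0 unfolding inj_on_def by (metis lessThan_iff mod_less_divisor)
    then show "w = c p" using p_unique i by auto
  next
    assume "w = c p"
    then show "(v, w) \<in> even_arcs k r c" using p j unfolding even_arcs_def by force
  qed
  ultimately have "{w. (v, w) \<in> flip A k r c} = {w. (v, w) \<in> A} - {c j} \<union> {c p}"
    using arcs[OF p(1)] arcs[OF j(1)] p j by auto
  then show ?thesis
    using card_exchange[OF fin] arcs[OF p(1)] arcs[OF j(1)] p j by simp
next
  case False
  have "(v, w) \<notin> even_arcs k r c" for w
    using False cyc unfolding even_arcs_def alt_cycle_def by (auto dest: spec[of _ "Suc _ mod k"])
  then have "{w. (v, w) \<in> flip A k r c} = {w. (v, w) \<in> A}"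
    using False unfolding odd_arcs_def by auto
  then show ?thesis by simp
qed

lemma flip_in_Omega:
  assumes G: "G \<in> Omega n d" and cyc: "alt_cycle G k r c"
  shows "flip G k r c \<in> Omega n d"
proof -
  have sub: "G \<subseteq> {1..n} \<times> {1..n}" and loop: "\<forall>v. (v, v) \<notin> G"
    using G unfolding Omega_def by auto
  have "(r i, c i) \<in> G" and "r (Suc i mod k) \<noteq> c i" and "Suc i mod k < k" if "i < k" for i
    using cyc that unfolding alt_cycle_def by auto
  then have "r i \<in> {1..n}" and "c i \<in> {1..n}" and "r (Suc i mod k) \<in> {1..n}" if "i < k" for i
    using sub that by blast+
  then have "flip G k r c \<subseteq> {1..n} \<times> {1..n}" and "\<forall>v. (v, v) \<notin> flip G k r c"
    using sub loop \<open>\<And>i. i < k \<Longrightarrow> r (Suc i mod k) \<noteq> c i\<close>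
    unfolding even_arcs_def by auto
  moreover have "in_deg (flip G k r c) v = in_deg G v" "out_deg (flip G k r c) v = out_deg G v" for v
    unfolding in_deg_def out_deg_def
    using flip_in_nbhd_card[OF cyc] flip_out_nbhd_card[OF cyc] Omega_nbhds_finite[OF G] by auto
  ultimately show ?thesis using G unfolding Omega_def by auto
qed

definition switch :: "(nat \<times> nat) set \<Rightarrow> nat \<Rightarrow> nat \<Rightarrow> nat \<Rightarrow> nat \<Rightarrow> (nat \<times> nat) set" where
  "switch A i j k l = A - {(i, j), (k, l)} \<union> {(i, l), (k, j)}"

definition switchable :: "(nat \<times> nat) set \<Rightarrow> nat \<Rightarrow> nat \<Rightarrow> nat \<Rightarrow> nat \<Rightarrow> bool" where
  "switchable A i j k l \<longleftrightarrow>
     (i, j) \<in> A \<and> (k, l) \<in> A \<and> (i, l) \<notin> A \<and> (k, j) \<notin> A \<and> distinct [i, j, k, l]"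

abbreviation reach :: "nat \<Rightarrow> nat \<Rightarrow> (nat \<times> nat) set \<Rightarrow> (nat \<times> nat) set \<Rightarrow> bool" where
  "reach n d \<equiv> (switch_in_Omega n d)\<^sup>*\<^sup>*"

lemma alt_cycle_two:
  assumes "\<forall>v. (v, v) \<notin> A"
  shows "alt_cycle A 2 r c \<longleftrightarrow> switchable A (r 0) (c 0) (r 1) (c 1)"
    and "flip A 2 r c = switch A (r 0) (c 0) (r 1) (c 1)"
proof -
  have two: "{..<2::nat} = {0, 1}" by auto
  have mod2: "Suc 0 mod 2 = (1::nat)" "Suc 1 mod 2 = (0::nat)" by simp_all
  have all2: "(\<forall>i<2::nat. P i) \<longleftrightarrow> P 0 \<and> P 1" for P by (auto simp: less_2_cases_iff)
  show "alt_cycle A 2 r c \<longleftrightarrow> switchable A (r 0) (c 0) (r 1) (c 1)"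
    using assms unfolding alt_cycle_def switchable_def two all2 mod2 inj_on_def by auto
  show "flip A 2 r c = switch A (r 0) (c 0) (r 1) (c 1)"
    unfolding odd_arcs_def even_arcs_def switch_def two mod2 by auto
qed

lemma switch_step_Omega:
  assumes G: "G \<in> Omega n d" and sw: "switchable G i j k l"
  shows "switch G i j k l \<in> Omega n d" and "reach n d G (switch G i j k l)"
proof -
  define r where "r = (\<lambda>t::nat. if t = 0 then i else k)"
  define c where "c = (\<lambda>t::nat. if t = 0 then j else l)"
  have loopfree: "\<forall>v. (v, v) \<notin> G" using G unfolding Omega_def by auto
  have "alt_cycle G 2 r c" and flip: "flip G 2 r c = switch G i j k l"
    using alt_cycle_two[OF loopfree, of r c] sw unfolding r_def c_def by auto
  then show H: "switch G i j k l \<in> Omega n d"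
    using flip_in_Omega[OF G] by metis
  have "card {i, j, k, l} = 4" using sw unfolding switchable_def by simp
  then have "switch_in_Omega n d G (switch G i j k l)"
    using G H sw unfolding switch_in_Omega_def switch_step_def switchable_def switch_def by blast
  then show "reach n d G (switch G i j k l)" by blast
qed

section \<open>Reversing a directed triangle\<close>

definition directed_triangle :: "(nat \<times> nat) set \<Rightarrow> nat \<Rightarrow> nat \<Rightarrow> nat \<Rightarrow> bool" where
  "directed_triangle A a b c \<longleftrightarrow> (a, b) \<in> A \<and> (b, c) \<in> A \<and> (c, a) \<in> A \<and>
     (b, a) \<notin> A \<and> (c, b) \<notin> A \<and> (a, c) \<notin> A"

definition reverse_triangle :: "(nat \<times> nat) set \<Rightarrow> nat \<Rightarrow> nat \<Rightarrow> nat \<Rightarrow> (nat \<times> nat) set" where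
  "reverse_triangle A a b c = A - {(a, b), (b, c), (c, a)} \<union> {(b, a), (c, b), (a, c)}"

lemma directed_triangle_rotate:
  "directed_triangle A a b c \<Longrightarrow> directed_triangle A b c a"
  "reverse_triangle A a b c = reverse_triangle A b c a"
  unfolding directed_triangle_def reverse_triangle_def by auto

lemma directed_triangle_distinct:
  "G \<in> Omega n d \<Longrightarrow> directed_triangle G a b c \<Longrightarrow> a \<noteq> b \<and> b \<noteq> c \<and> a \<noteq> c"
  unfolding Omega_def directed_triangle_def by auto

text \<open>The triangle reversal is not a switch itself, but a fourth vertex \<open>y\<close> allows it
  to be written as three or four switches.\<close>
lemma reverse_triangle_mixed:
  assumes G: "G \<in> Omega n d" and tri: "directed_triangle G a b c"
    and y: "y \<notin> {a, b, c}" "(y, c) \<in> G" "(y, b) \<notin> G"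
  shows "reach n d G (reverse_triangle G a b c)"
proof -
  have ne: "a \<noteq> b" "b \<noteq> c" "a \<noteq> c" using directed_triangle_distinct[OF G tri] by auto
  note arcs = tri[unfolded directed_triangle_def]
  define H1 where "H1 = switch G a b y c"
  have "switchable G a b y c" using arcs y ne unfolding switchable_def by auto
  then have H1: "H1 \<in> Omega n d" "reach n d G H1"
    using switch_step_Omega[OF G] unfolding H1_def by auto
  show ?thesis
  proof (cases "(y, a) \<in> G")
    case False
    define H2 where "H2 = switch H1 c a y b"
    have "switchable H1 c a y b" using arcs y ne False unfolding switchable_def H1_def switch_def by auto
    then have H2: "H2 \<in> Omega n d" "reach n d H1 H2"
      using switch_step_Omega[OF H1(1)] unfolding H2_def by auto
    have "switchable H2 b c y a" using arcs y ne False
      unfolding switchable_def H2_def H1_def switch_def by auto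
    moreover have "switch H2 b c y a = reverse_triangle G a b c" using arcs y ne False
      unfolding H2_def H1_def switch_def reverse_triangle_def by auto
    ultimately have "reach n d H2 (reverse_triangle G a b c)"
      using switch_step_Omega(2)[OF H2(1)] by metis
    then show ?thesis using H1 H2 by (metis rtranclp_trans)
  next
    case True
    define H2 where "H2 = switch H1 y a b c"
    have "switchable H1 y a b c" using arcs y ne True unfolding switchable_def H1_def switch_def by auto
    then have H2: "H2 \<in> Omega n d" "reach n d H1 H2"
      using switch_step_Omega[OF H1(1)] unfolding H2_def by auto
    have "switchable H2 c a y b" using arcs y ne True
      unfolding switchable_def H2_def H1_def switch_def by auto
    moreover have "switch H2 c a y b = reverse_triangle G a b c" using arcs y ne True
      unfolding H2_def H1_def switch_def reverse_triangle_def by auto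
    ultimately have "reach n d H2 (reverse_triangle G a b c)"
      using switch_step_Omega(2)[OF H2(1)] by metis
    then show ?thesis using H1 H2 by (metis rtranclp_trans)
  qed
qed

lemma reverse_triangle_no_arcs:
  assumes G: "G \<in> Omega n d" and tri: "directed_triangle G a b c"
    and y: "y \<notin> {a, b, c}" "y \<in> {1..n}" "(y, a) \<notin> G" "(y, b) \<notin> G" "(y, c) \<notin> G"
  shows "reach n d G (reverse_triangle G a b c)"
proof -
  have ne: "a \<noteq> b" "b \<noteq> c" "a \<noteq> c" using directed_triangle_distinct[OF G tri] by auto
  note arcs = tri[unfolded directed_triangle_def]
  have a: "a \<in> {1..n}" using G arcs unfolding Omega_def by auto
  txt \<open>\<open>y\<close> has more out-neighbours than \<open>a\<close> has besides \<open>b\<close>, so some out-neighbour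
    \<open>z\<close> of \<open>y\<close> is not an out-neighbour of \<open>a\<close>.\<close>
  obtain z where z: "(y, z) \<in> G" "(a, z) \<notin> G"
  proof -
    have "card ({w. (a, w) \<in> G} - {b}) < card {w. (a, w) \<in> G}"
      using card_Diff1_less[OF Omega_nbhds_finite(1)[OF G]] arcs by blast
    also have "\<dots> = card {w. (y, w) \<in> G}"
      using Omega_nbhds_card[OF G a] Omega_nbhds_card[OF G y(2)] by simp
    finally have "card ({w. (a, w) \<in> G} - {b}) < card {w. (y, w) \<in> G}" .
    then have "\<not> {w. (y, w) \<in> G} \<subseteq> {w. (a, w) \<in> G} - {b}"
      using card_mono[OF finite_Diff[OF Omega_nbhds_finite(1)[OF G]]] by (meson not_le)
    then show ?thesis using that y by blast
  qed
  have zne: "z \<notin> {y, a, b, c}" using z y G unfolding Omega_def by auto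
  define H1 where "H1 = switch G a b y z"
  have "switchable G a b y z" using arcs y ne z zne unfolding switchable_def by auto
  then have H1: "H1 \<in> Omega n d" "reach n d G H1"
    using switch_step_Omega[OF G] unfolding H1_def by auto
  define H2 where "H2 = switch H1 c a y b"
  have "switchable H1 c a y b" using arcs y ne z zne unfolding switchable_def H1_def switch_def by auto
  then have H2: "H2 \<in> Omega n d" "reach n d H1 H2"
    using switch_step_Omega[OF H1(1)] unfolding H2_def by auto
  define H3 where "H3 = switch H2 b c y a"
  have "switchable H2 b c y a" using arcs y ne z zne
    unfolding switchable_def H2_def H1_def switch_def by auto
  then have H3: "H3 \<in> Omega n d" "reach n d H2 H3"
    using switch_step_Omega[OF H2(1)] unfolding H3_def by auto
  have "switchable H3 a z y c" using arcs y ne z zne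
    unfolding switchable_def H3_def H2_def H1_def switch_def by auto
  moreover have "switch H3 a z y c = reverse_triangle G a b c" using arcs y ne z zne
    unfolding H3_def H2_def H1_def switch_def reverse_triangle_def by auto
  ultimately have "reach n d H3 (reverse_triangle G a b c)"
    using switch_step_Omega(2)[OF H3(1)] by metis
  then show ?thesis using H1 H2 H3 by (metis rtranclp_trans)
qed

lemma reverse_triangle_all_arcs:
  assumes G: "G \<in> Omega n d" and tri: "directed_triangle G a b c"
    and y: "y \<notin> {a, b, c}" "y \<in> {1..n}" "(y, a) \<in> G" "(y, b) \<in> G" "(y, c) \<in> G"
  shows "reach n d G (reverse_triangle G a b c)"
proof -
  have ne: "a \<noteq> b" "b \<noteq> c" "a \<noteq> c" using directed_triangle_distinct[OF G tri] by auto
  note arcs = tri[unfolded directed_triangle_def]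
  have a: "a \<in> {1..n}" using G arcs unfolding Omega_def by auto
  txt \<open>\<open>a\<close> has an out-neighbour \<open>z\<close> outside \<open>{b, y}\<close> that is not an out-neighbour of
    \<open>y\<close>, since \<open>y\<close> spends three of its \<open>d\<close> out-arcs on the triangle.\<close>
  obtain z where z: "(a, z) \<in> G" "(y, z) \<notin> G" "z \<notin> {a, b, c, y}"
  proof -
    let ?Ny = "{w. (y, w) \<in> G} - {a, b, c}"
    have sub: "{a, b, c} \<subseteq> {w. (y, w) \<in> G}" and three: "card {a, b, c} = 3" using y ne by auto
    have "card ?Ny = d - 3"
      using Omega_nbhds_card(1)[OF G y(2)] three sub by (simp add: card_Diff_subset)
    moreover have "3 \<le> d"
      using card_mono[OF Omega_nbhds_finite(1)[OF G, of y] sub] three Omega_nbhds_card(1)[OF G y(2)]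
      by simp
    moreover have "card {b, y} \<le> 2" by (cases "b = y") auto
    then have "card ({b, y} \<union> ?Ny) \<le> 2 + card ?Ny"
      using card_Un_le[of "{b, y}" ?Ny] by simp
    ultimately have "card ({b, y} \<union> ?Ny) < card {w. (a, w) \<in> G}"
      using Omega_nbhds_card(1)[OF G a] by simp
    then have "\<not> {w. (a, w) \<in> G} \<subseteq> {b, y} \<union> ?Ny"
      using card_mono[of "{b, y} \<union> ?Ny"] Omega_nbhds_finite(1)[OF G, of y] by (meson finite.emptyI
        finite.insertI finite_Diff finite_UnI not_le)
    moreover have "(a, a) \<notin> G" using G unfolding Omega_def by auto
    ultimately show ?thesis using that arcs by blast
  qed
  define H1 where "H1 = switch G a z y c"
  have "switchable G a z y c" using arcs y ne z unfolding switchable_def by auto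
  then have H1: "H1 \<in> Omega n d" "reach n d G H1"
    using switch_step_Omega[OF G] unfolding H1_def by auto
  define H2 where "H2 = switch H1 b c y a"
  have "switchable H1 b c y a" using arcs y ne z unfolding switchable_def H1_def switch_def by auto
  then have H2: "H2 \<in> Omega n d" "reach n d H1 H2"
    using switch_step_Omega[OF H1(1)] unfolding H2_def by auto
  define H3 where "H3 = switch H2 c a y b"
  have "switchable H2 c a y b" using arcs y ne z
    unfolding switchable_def H2_def H1_def switch_def by auto
  then have H3: "H3 \<in> Omega n d" "reach n d H2 H3"
    using switch_step_Omega[OF H2(1)] unfolding H3_def by auto
  have "switchable H3 a b y z" using arcs y ne z
    unfolding switchable_def H3_def H2_def H1_def switch_def by auto
  moreover have "switch H3 a b y z = reverse_triangle G a b c" using arcs y ne z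
    unfolding H3_def H2_def H1_def switch_def reverse_triangle_def by auto
  ultimately have "reach n d H3 (reverse_triangle G a b c)"
    using switch_step_Omega(2)[OF H3(1)] by metis
  then show ?thesis using H1 H2 H3 by (metis rtranclp_trans)
qed

text \<open>For \<open>n \<ge> 4\<close> a fourth vertex exists, so every directed triangle can be reversed.\<close>
lemma reverse_triangle_reach:
  assumes G: "G \<in> Omega n d" and n4: "4 \<le> n" and tri: "directed_triangle G a b c"
  shows "reach n d G (reverse_triangle G a b c)"
proof -
  obtain y where y: "y \<in> {1..n}" "y \<notin> {a, b, c}"
  proof -
    have "card {a, b, c} \<le> 3" by (auto simp: card_insert_if)
    then have "card {a, b, c} < card {1..n}" using n4 by simp
    then have "\<not> {1..n} \<subseteq> {a, b, c}" by (meson card_mono finite.emptyI finite.insertI not_le)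
    then show ?thesis using that by blast
  qed
  note rot = directed_triangle_rotate
  have "(y, a) \<in> G \<and> (y, b) \<in> G \<and> (y, c) \<in> G \<or> (y, a) \<notin> G \<and> (y, b) \<notin> G \<and> (y, c) \<notin> G \<or>
      (y, c) \<in> G \<and> (y, b) \<notin> G \<or> (y, a) \<in> G \<and> (y, c) \<notin> G \<or> (y, b) \<in> G \<and> (y, a) \<notin> G"
    by blast
  then show ?thesis
    using reverse_triangle_all_arcs[OF G tri y(2,1)] reverse_triangle_no_arcs[OF G tri y(2,1)]
      reverse_triangle_mixed[OF G tri y(2)]
      reverse_triangle_mixed[OF G rot(1)[OF tri], of y] reverse_triangle_mixed[OF G rot(1)[OF rot(1)[OF tri]], of y]
      y(2) rot(2)[of G a b c] rot(2)[of G b c a]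
    by auto
qed

section \<open>Alternating cycles inside a symmetric difference\<close>

definition alt_walk :: "(nat \<times> nat) set \<Rightarrow> (nat \<times> nat) set \<Rightarrow> nat \<Rightarrow> (nat \<Rightarrow> nat) \<Rightarrow> (nat \<Rightarrow> nat) \<Rightarrow> bool" where
  "alt_walk R B m r c \<longleftrightarrow> 0 < m \<and> (\<forall>t<m. (r t, c t) \<in> R \<and> (r (Suc t mod m), c t) \<in> B)"

text \<open>Since both digraphs are \<open>d\<close>-regular, an arc of one that the other lacks is matched
  at its tail by an out-arc, and at its head by an in-arc, that the first one lacks.\<close>
lemma diff_arc_out:
  assumes G: "G \<in> Omega n d" and G': "G' \<in> Omega n d" and uv: "(u, v) \<in> G' - G"
  obtains w where "(u, w) \<in> G - G'"
proof -
  have u: "u \<in> {1..n}" using G' uv unfolding Omega_def by auto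
  have "\<not> {w. (u, w) \<in> G} \<subseteq> {w. (u, w) \<in> G'}"
  proof
    assume "{w. (u, w) \<in> G} \<subseteq> {w. (u, w) \<in> G'}"
    then have "{w. (u, w) \<in> G} = {w. (u, w) \<in> G'}"
      using card_subset_eq Omega_nbhds_finite[OF G'] Omega_nbhds_card[OF G u]
        Omega_nbhds_card[OF G' u] by metis
    then show False using uv by auto
  qed
  then show ?thesis using that by blast
qed

lemma diff_arc_in:
  assumes G: "G \<in> Omega n d" and G': "G' \<in> Omega n d" and uv: "(u, v) \<in> G - G'"
  obtains w where "(w, v) \<in> G' - G"
proof -
  have v: "v \<in> {1..n}" using G uv unfolding Omega_def by auto
  have "\<not> {w. (w, v) \<in> G'} \<subseteq> {w. (w, v) \<in> G}"
  proof
    assume "{w. (w, v) \<in> G'} \<subseteq> {w. (w, v) \<in> G}"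
    then have "{w. (w, v) \<in> G'} = {w. (w, v) \<in> G}"
      using card_subset_eq Omega_nbhds_finite[OF G] Omega_nbhds_card[OF G v]
        Omega_nbhds_card[OF G' v] by metis
    then show False using uv by auto
  qed
  then show ?thesis using that by blast
qed

text \<open>Following these matched arcs from any arc of \<open>G - G'\<close> must eventually repeat an
  arc, which closes an alternating walk.\<close>
lemma alt_walk_exists:
  assumes G: "G \<in> Omega n d" and G': "G' \<in> Omega n d" and ne: "G \<noteq> G'"
  shows "\<exists>m r c. alt_walk (G - G') (G' - G) m r c"
proof -
  let ?R = "G - G'" and ?B = "G' - G"
  obtain x0 where x0: "x0 \<in> ?R"
  proof (cases "G \<subseteq> G'")
    case True
    then obtain u v where "(u, v) \<in> ?B" using ne by auto
    then show ?thesis using diff_arc_out[OF G G'] that by blast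
  qed auto
  have "\<exists>y. y \<in> ?R \<and> (fst y, snd x) \<in> ?B" if "x \<in> ?R" for x
  proof -
    have "(fst x, snd x) \<in> ?R" using that by simp
    then obtain w where w: "(w, snd x) \<in> ?B" by (rule diff_arc_in[OF G G'])
    then obtain w' where "(w, w') \<in> ?R" using diff_arc_out[OF G G'] by blast
    then show ?thesis using w by force
  qed
  then obtain F where F: "\<And>x. x \<in> ?R \<Longrightarrow> F x \<in> ?R \<and> (fst (F x), snd x) \<in> ?B" by metis
  define s where "s = (\<lambda>t. (F ^^ t) x0)"
  have sR: "s t \<in> ?R" for t by (induction t) (use x0 F in \<open>auto simp: s_def\<close>)
  have sS: "s (Suc t) = F (s t)" for t by (simp add: s_def)
  have "\<not> inj_on s {..card ?R}"
  proof
    assume "inj_on s {..card ?R}"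
    then have "card (s ` {..card ?R}) = Suc (card ?R)" by (simp add: card_image)
    moreover have "card (s ` {..card ?R}) \<le> card ?R"
      using Omega_finite[OF G] sR by (intro card_mono) auto
    ultimately show False by simp
  qed
  then obtain p q where pq: "p < q" "s p = s q"
    unfolding inj_on_def by (metis linorder_neqE_nat)
  have "alt_walk ?R ?B (q - p) (\<lambda>t. fst (s (p + t))) (\<lambda>t. snd (s (p + t)))"
    unfolding alt_walk_def
  proof (intro conjI allI impI)
    fix t assume t: "t < q - p"
    show "(fst (s (p + t)), snd (s (p + t))) \<in> ?R" using sR by simp
    have "s (p + Suc t mod (q - p)) = s (Suc (p + t))"
    proof (cases "Suc t < q - p")
      case False
      then have "Suc t = q - p" using t by simp
      then have "Suc (p + t) = q" and "Suc t mod (q - p) = 0" using pq by simp_all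
      then show ?thesis using pq by simp
    qed simp
    then show "(fst (s (p + Suc t mod (q - p))), snd (s (p + t))) \<in> ?B"
      using F[OF sR[of "p + t"]] sS[of "p + t"] by simp
  qed (use pq in simp)
  then show ?thesis by blast
qed

lemma alt_walk_segment:
  assumes w: "alt_walk R B m r c" and se: "s \<le> e" "e < m" and chord: "(r s, c e) \<in> B"
  shows "alt_walk R B (Suc e - s) (\<lambda>t. r (s + t)) (\<lambda>t. c (s + t))"
  unfolding alt_walk_def
proof (intro conjI allI impI)
  fix t assume t: "t < Suc e - s"
  show "(r (s + t), c (s + t)) \<in> R" using w t se unfolding alt_walk_def by auto
  show "(r (s + Suc t mod (Suc e - s)), c (s + t)) \<in> B"
  proof (cases "Suc t < Suc e - s")
    case True
    then have "Suc (s + t) < m" and "Suc t mod (Suc e - s) = Suc t" using se by auto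
    moreover have "(r (Suc (s + t) mod m), c (s + t)) \<in> B"
      using w \<open>Suc (s + t) < m\<close> unfolding alt_walk_def by (metis Suc_lessD)
    ultimately show ?thesis by simp
  next
    case False
    then have "Suc t = Suc e - s" using t by simp
    then have "s + t = e" and "Suc t mod (Suc e - s) = 0" using se by auto
    then show ?thesis using chord by simp
  qed
qed (use se in simp)

lemma shortest_alt_walk_is_alt_cycle:
  assumes w: "alt_walk (G - G') (G' - G) m r c" and loopfree: "\<forall>v. (v, v) \<notin> G'"
    and shortest: "\<And>m' r' c'. alt_walk (G - G') (G' - G) m' r' c' \<Longrightarrow> m \<le> m'"
  shows "alt_cycle G m r c"
proof -
  have arcs: "(r t, c t) \<in> G - G'" "(r (Suc t mod m), c t) \<in> G' - G" if "t < m" for t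
    using w that unfolding alt_walk_def by auto
  have "2 \<le> m"
  proof (rule ccontr)
    assume "\<not> 2 \<le> m"
    then have "m = 1" using w unfolding alt_walk_def by simp
    then show False using arcs[of 0] by auto
  qed
  moreover have "inj_on r {..<m}"
  proof (rule linorder_inj_onI')
    fix i j assume ij: "i \<in> {..<m}" "j \<in> {..<m}" "i < j"
    show "r i \<noteq> r j"
    proof
      assume "r i = r j"
      then have chord: "(r i, c (j - 1)) \<in> G' - G" using arcs(2)[of "j - 1"] ij by simp
      have "alt_walk (G - G') (G' - G) (Suc (j - 1) - i) (\<lambda>t. r (i + t)) (\<lambda>t. c (i + t))"
        by (rule alt_walk_segment[OF w _ _ chord]) (use ij in auto)
      then have "m \<le> Suc (j - 1) - i" by (rule shortest)
      then show False using ij by simp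
    qed
  qed
  moreover have "inj_on c {..<m}"
  proof (rule linorder_inj_onI')
    fix i j assume ij: "i \<in> {..<m}" "j \<in> {..<m}" "i < j"
    show "c i \<noteq> c j"
    proof
      assume "c i = c j"
      then have chord: "(r (Suc i), c j) \<in> G' - G" using arcs(2)[of i] ij by simp
      have "alt_walk (G - G') (G' - G) (Suc j - Suc i) (\<lambda>t. r (Suc i + t)) (\<lambda>t. c (Suc i + t))"
        by (rule alt_walk_segment[OF w _ _ chord]) (use ij in auto)
      then have "m \<le> Suc j - Suc i" by (rule shortest)
      then show False using ij by simp
    qed
  qed
  moreover have "\<forall>t<m. (r t, c t) \<in> G \<and> (r (Suc t mod m), c t) \<notin> G \<and> r (Suc t mod m) \<noteq> c t"
    using arcs loopfree by (metis DiffD1 DiffD2)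
  ultimately show ?thesis unfolding alt_cycle_def by blast
qed

lemma alt_cycle_in_sym_diff:
  assumes G: "G \<in> Omega n d" and G': "G' \<in> Omega n d" and ne: "G \<noteq> G'"
  obtains k r c where "alt_cycle G k r c"
    and "odd_arcs k r c \<subseteq> G - G'" and "even_arcs k r c \<subseteq> G' - G"
proof -
  let ?P = "\<lambda>m. \<exists>r c. alt_walk (G - G') (G' - G) m r c"
  define m where "m = (LEAST m. ?P m)"
  have "?P m" unfolding m_def by (rule LeastI_ex[OF alt_walk_exists[OF G G' ne]])
  have least: "m \<le> m'" if "?P m'" for m' unfolding m_def using that by (rule Least_le)
  from \<open>?P m\<close> obtain r c where w: "alt_walk (G - G') (G' - G) m r c" by blast
  have loopfree: "\<forall>v. (v, v) \<notin> G'" using G' unfolding Omega_def by auto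
  have "alt_cycle G m r c"
    by (rule shortest_alt_walk_is_alt_cycle[OF w loopfree]) (use least in blast)
  moreover have "odd_arcs m r c \<subseteq> G - G'" and "even_arcs m r c \<subseteq> G' - G"
    using w unfolding alt_walk_def odd_arcs_def even_arcs_def by auto
  ultimately show ?thesis by (rule that)
qed

section \<open>Shortcuts of alternating cycles\<close>

abbreviation cycle_arcs :: "nat \<Rightarrow> (nat \<Rightarrow> nat) \<Rightarrow> (nat \<Rightarrow> nat) \<Rightarrow> (nat \<times> nat) set" where
  "cycle_arcs k r c \<equiv> odd_arcs k r c \<union> even_arcs k r c"

lemma card_cycle_arcs:
  assumes "alt_cycle A k r c"
  shows "card (cycle_arcs k r c) = 2 * k"
proof -
  have "odd_arcs k r c \<inter> even_arcs k r c = {}" using alt_cycle_arcs[OF assms] by auto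
  then show ?thesis using alt_cycle_card_arcs[OF assms]
    by (simp add: card_Un_disjoint odd_arcs_def even_arcs_def)
qed

lemma sym_diff_flip:
  assumes "alt_cycle G k r c"
  shows "sym_diff G (flip G k r c) = cycle_arcs k r c"
  using alt_cycle_arcs[OF assms]  by auto

lemma sym_diff_flips:
  assumes "alt_cycle G k r c" and "alt_cycle G k' r' c'"
  shows "sym_diff (flip G k' r' c') (flip G k r c) = sym_diff (cycle_arcs k' r' c') (cycle_arcs k r c)"
  using alt_cycle_arcs[OF assms(1)] alt_cycle_arcs[OF assms(2)]  by auto

lemma card_sym_diff_less:
  assumes "finite X" and "S \<subseteq> X" and "S \<subseteq> Y" and "2 \<le> card S" and "Y - X \<subseteq> {p}"
  shows "card (sym_diff Y X) < card X"
proof -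
  have "card (sym_diff Y X) \<le> card (Y - X) + card (X - Y)"
     by (rule card_Un_le)
  also have "card (Y - X) \<le> 1"
    using card_mono[OF _ assms(5)] by simp
  also have "card (X - Y) \<le> card (X - S)"
    using assms by (intro card_mono) auto
  also have "card (X - S) = card X - card S"
    using assms by (simp add: card_Diff_subset finite_subset)
  finally show ?thesis using assms card_mono[of X S] by linarith
qed

definition has_shortcut :: "(nat \<times> nat) set \<Rightarrow> nat \<Rightarrow> (nat \<Rightarrow> nat) \<Rightarrow> (nat \<Rightarrow> nat) \<Rightarrow> bool" where
  "has_shortcut G k r c \<longleftrightarrow> (\<exists>k' r' c'. alt_cycle G k' r' c' \<and> k' < k \<and>
     card (sym_diff (cycle_arcs k' r' c') (cycle_arcs k r c)) < 2 * k)"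

lemma shortcutI:
  assumes cyc: "alt_cycle G k r c" and cyc': "alt_cycle G k' r' c'" and k': "k' < k"
    and common: "odd_arcs k' r' c' \<subseteq> odd_arcs k r c \<or> even_arcs k' r' c' \<subseteq> even_arcs k r c"
    and new: "cycle_arcs k' r' c' - cycle_arcs k r c \<subseteq> {p}"
  shows "has_shortcut G k r c"
proof -
  have "2 \<le> k'" using cyc' unfolding alt_cycle_def by simp
  have "card (sym_diff (cycle_arcs k' r' c') (cycle_arcs k r c)) < card (cycle_arcs k r c)"
  proof (cases "odd_arcs k' r' c' \<subseteq> odd_arcs k r c")
    case True
    then show ?thesis using alt_cycle_card_arcs(1)[OF cyc'] \<open>2 \<le> k'\<close> new
      by (intro card_sym_diff_less[of _ "odd_arcs k' r' c'"]) (auto simp: odd_arcs_def even_arcs_def)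
  next
    case False
    then have "even_arcs k' r' c' \<subseteq> even_arcs k r c" using common by blast
    then show ?thesis using alt_cycle_card_arcs(2)[OF cyc'] \<open>2 \<le> k'\<close> new
      by (intro card_sym_diff_less[of _ "even_arcs k' r' c'"]) (auto simp: odd_arcs_def even_arcs_def)
  qed
  then show ?thesis
    unfolding has_shortcut_def card_cycle_arcs[OF cyc] using cyc' k' by blast
qed

text \<open>If the chord \<open>r 0 \<rightarrow> c b\<close> is absent, the first \<open>b + 1\<close> odd arcs close up with it
  into a shorter alternating cycle.\<close>
lemma shortcut_absent_chord:
  assumes cyc: "alt_cycle G k r c" and b: "1 \<le> b" "b + 2 \<le> k"
    and chord: "r 0 \<noteq> c b" "(r 0, c b) \<notin> G"
  shows "has_shortcut G k r c"
proof (rule shortcutI[OF cyc, of "b + 1" r c "(r 0, c b)"])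
  have ir: "inj_on r {..<k}" and ic: "inj_on c {..<k}"
    and arcs: "\<And>i. i < k \<Longrightarrow> (r i, c i) \<in> G \<and> (r (Suc i mod k), c i) \<notin> G \<and> r (Suc i mod k) \<noteq> c i"
    using cyc unfolding alt_cycle_def by auto
  have "(r (Suc i mod (b + 1)), c i) \<notin> G \<and> r (Suc i mod (b + 1)) \<noteq> c i" if "i < b + 1" for i
  proof (cases "i = b")
    case False
    then have "Suc i mod (b + 1) = Suc i" and "Suc i mod k = Suc i" using that b by auto
    then show ?thesis using arcs[of i] that b by simp
  qed (use chord in simp)
  then show "alt_cycle G (b + 1) r c"
    unfolding alt_cycle_def using b arcs inj_on_subset[OF ir] inj_on_subset[OF ic] by auto
  show "b + 1 < k" using b by simp
  show "odd_arcs (b + 1) r c \<subseteq> odd_arcs k r c \<or> even_arcs (b + 1) r c \<subseteq> even_arcs k r c"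
    using b unfolding odd_arcs_def by auto
  have "(r (Suc i mod (b + 1)), c i) \<in> even_arcs k r c \<union> {(r 0, c b)}" if "i < b + 1" for i
  proof (cases "i = b")
    case False
    then have "Suc i mod (b + 1) = Suc i mod k" using that b by auto
    then show ?thesis using that b unfolding even_arcs_def by force
  qed simp
  then show "cycle_arcs (b + 1) r c - cycle_arcs k r c \<subseteq> {(r 0, c b)}"
    using b unfolding odd_arcs_def even_arcs_def[of "b + 1"] by auto
qed

text \<open>If the chord \<open>r 0 \<rightarrow> c b\<close> is present, it replaces the odd arcs \<open>0..b\<close>: together with
  the remaining part of the cycle it forms a shorter alternating cycle.\<close>
lemma shortcut_present_chord:
  assumes cyc: "alt_cycle G k r c" and b: "1 \<le> b" "b + 2 \<le> k" and chord: "(r 0, c b) \<in> G"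
  shows "has_shortcut G k r c"
proof -
  define idx where "idx = (\<lambda>t. if t = 0 then 0 else b + t)"
  define r' where "r' = r \<circ> idx"
  define c' where "c' = (\<lambda>t. c (b + t))"
  have ir: "inj_on r {..<k}" and ic: "inj_on c {..<k}"
    and arcs: "\<And>i. i < k \<Longrightarrow> (r i, c i) \<in> G \<and> (r (Suc i mod k), c i) \<notin> G \<and> r (Suc i mod k) \<noteq> c i"
    using cyc unfolding alt_cycle_def by auto
  have even_eq: "(r' (Suc t mod (k - b)), c' t) = (r (Suc (b + t) mod k), c (b + t))" if "t < k - b" for t
  proof (cases "Suc t < k - b")
    case False
    then have "Suc t = k - b" using that by simp
    then have "Suc (b + t) = k" using b by simp
    then have "Suc t mod (k - b) = 0" and "Suc (b + t) mod k = 0"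
      using \<open>Suc t = k - b\<close> by simp_all
    then show ?thesis unfolding r'_def c'_def idx_def by simp
  qed (simp add: r'_def c'_def idx_def)
  have "inj_on r' {..<k - b}"
    unfolding r'_def using b
    by (intro comp_inj_on inj_on_subset[OF ir]) (auto simp: idx_def inj_on_def)
  moreover have "inj_on c' {..<k - b}"
  proof (rule inj_onI)
    fix s t assume "s \<in> {..<k - b}" "t \<in> {..<k - b}" "c' s = c' t"
    then have "b + s = b + t" using inj_onD[OF ic, of "b + s" "b + t"] unfolding c'_def by auto
    then show "s = t" by simp
  qed
  moreover have "(r' t, c' t) \<in> G" if "t < k - b" for t
    using arcs[of "b + t"] that chord unfolding r'_def c'_def idx_def by auto
  ultimately have cyc': "alt_cycle G (k - b) r' c'"
    unfolding alt_cycle_def using b even_eq arcs by auto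
  show ?thesis
  proof (rule shortcutI[OF cyc cyc', of "(r 0, c b)"])
    show "k - b < k" using b by simp
    have "even_arcs (k - b) r' c' \<subseteq> even_arcs k r c"
      unfolding even_arcs_def[of "k - b"] using even_eq
      by (force simp: even_arcs_def)
    then show "odd_arcs (k - b) r' c' \<subseteq> odd_arcs k r c \<or> even_arcs (k - b) r' c' \<subseteq> even_arcs k r c"
      by blast
    have "(r' t, c' t) \<in> odd_arcs k r c \<union> {(r 0, c b)}" if "t < k - b" for t
      using that unfolding r'_def c'_def idx_def odd_arcs_def by auto
    then show "cycle_arcs (k - b) r' c' - cycle_arcs k r c \<subseteq> {(r 0, c b)}"
      using \<open>even_arcs (k - b) r' c' \<subseteq> even_arcs k r c\<close> unfolding odd_arcs_def[of "k - b"] by auto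
  qed
qed

lemma shortcut_chord:
  assumes "alt_cycle G k r c" and "1 \<le> b" "b + 2 \<le> k" and "r 0 \<noteq> c b"
  shows "has_shortcut G k r c"
  using assms shortcut_absent_chord shortcut_present_chord by blast

section \<open>Alternating cycles of length three\<close>

lemma three_cycle_arcs:
  "odd_arcs 3 r c = {(r 0, c 0), (r 1, c 1), (r 2, c 2)}"
  "even_arcs 3 r c = {(r 1, c 0), (r 2, c 1), (r 0, c 2)}"
proof -
  have three: "{..<3::nat} = {0, 1, 2}" by auto
  have succ: "Suc 0 mod 3 = 1" "Suc 1 mod 3 = 2" "Suc 2 mod 3 = (0::nat)" by simp_all
  show "odd_arcs 3 r c = {(r 0, c 0), (r 1, c 1), (r 2, c 2)}"
    unfolding odd_arcs_def three by simp
  show "even_arcs 3 r c = {(r 1, c 0), (r 2, c 1), (r 0, c 2)}"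
    unfolding even_arcs_def three image_insert image_empty succ by simp
qed

lemma alt_cycle_three:
  "alt_cycle G 3 r c \<longleftrightarrow> distinct [r 0, r 1, r 2] \<and> distinct [c 0, c 1, c 2] \<and>
     (r 0, c 0) \<in> G \<and> (r 1, c 1) \<in> G \<and> (r 2, c 2) \<in> G \<and>
     (r 1, c 0) \<notin> G \<and> (r 2, c 1) \<notin> G \<and> (r 0, c 2) \<notin> G \<and> r 1 \<noteq> c 0 \<and> r 2 \<noteq> c 1 \<and> r 0 \<noteq> c 2"
proof -
  have three: "{..<3::nat} = {0, 1, 2}" by auto
  have all3: "(\<forall>i<3::nat. P i) \<longleftrightarrow> P 0 \<and> P 1 \<and> P 2" for P
    using less_Suc_eq[of _ 2] less_2_cases_iff by (auto simp: numeral_3_eq_3)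
  have succ: "Suc 0 mod 3 = 1" "Suc 1 mod 3 = 2" "Suc 2 mod 3 = (0::nat)" by simp_all
  show ?thesis unfolding alt_cycle_def three all3 succ by (simp add: inj_on_def) argo
qed

text \<open>Rotating a 3-cycle by one position changes neither its validity nor its arcs;
  rotation brings each of the three possible chords into the position \<open>r 0 \<rightarrow> c 1\<close>.\<close>
definition rotate3 :: "(nat \<Rightarrow> nat) \<Rightarrow> nat \<Rightarrow> nat" where
  "rotate3 f = (\<lambda>t. if t = 0 then f 1 else if t = 1 then f 2 else f 0)"

lemma alt_cycle_three_rotate:
  assumes "alt_cycle G 3 r c"
  shows "alt_cycle G 3 (rotate3 r) (rotate3 c)"
    and "cycle_arcs 3 (rotate3 r) (rotate3 c) = cycle_arcs 3 r c"
  using assms unfolding alt_cycle_three three_cycle_arcs rotate3_def by auto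

lemma has_shortcut_cong:
  "cycle_arcs k r' c' = cycle_arcs k r c \<Longrightarrow> has_shortcut G k r' c' \<Longrightarrow> has_shortcut G k r c"
  unfolding has_shortcut_def by simp

text \<open>A 3-cycle without any chord is a directed triangle, whose flip is its reversal.\<close>
lemma three_cycle_reach_or_shortcut:
  assumes G: "G \<in> Omega n d" and n4: "4 \<le> n" and cyc: "alt_cycle G 3 r c"
  shows "reach n d G (flip G 3 r c) \<or> has_shortcut G 3 r c"
proof -
  note rot1 = alt_cycle_three_rotate[OF cyc]
  note rot2 = alt_cycle_three_rotate[OF rot1(1)]
  consider "r 0 \<noteq> c 1" | "r 1 \<noteq> c 2" | "r 2 \<noteq> c 0" | "r 0 = c 1" "r 1 = c 2" "r 2 = c 0"
    by blast
  then show ?thesis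
  proof cases
    case 1
    then show ?thesis using shortcut_chord[OF cyc, of 1] by simp
  next
    case 2
    then have "has_shortcut G 3 (rotate3 r) (rotate3 c)"
      using shortcut_chord[OF rot1(1), of 1] by (simp add: rotate3_def)
    then show ?thesis using has_shortcut_cong[OF rot1(2)] by blast
  next
    case 3
    then have "has_shortcut G 3 (rotate3 (rotate3 r)) (rotate3 (rotate3 c))"
      using shortcut_chord[OF rot2(1), of 1] by (simp add: rotate3_def)
    then show ?thesis using has_shortcut_cong[OF rot2(2)] has_shortcut_cong[OF rot1(2)] by blast
  next
    case 4
    then have "directed_triangle G (r 0) (r 2) (r 1)"
      and "flip G 3 r c = reverse_triangle G (r 0) (r 2) (r 1)"
      using cyc unfolding alt_cycle_three three_cycle_arcs directed_triangle_def reverse_triangle_def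
      by auto
    then show ?thesis using reverse_triangle_reach[OF G n4] by simp
  qed
qed

section \<open>Connectivity of the switch chain\<close>

lemma flip_reach_or_shortcut:
  assumes G: "G \<in> Omega n d" and n4: "4 \<le> n" and cyc: "alt_cycle G k r c"
  shows "reach n d G (flip G k r c) \<or> has_shortcut G k r c"
proof -
  have "2 \<le> k" and ic: "inj_on c {..<k}" using cyc unfolding alt_cycle_def by auto
  then consider "k = 2" | "k = 3" | "4 \<le> k" by linarith
  then show ?thesis
  proof cases
    case 1
    have "\<forall>v. (v, v) \<notin> G" using G unfolding Omega_def by auto
    then have "switchable G (r 0) (c 0) (r 1) (c 1)"
      and "flip G k r c = switch G (r 0) (c 0) (r 1) (c 1)"
      using alt_cycle_two cyc 1 by auto
    then show ?thesis using switch_step_Omega(2)[OF G] by simp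
  next
    case 2
    then show ?thesis using three_cycle_reach_or_shortcut[OF G n4] cyc by blast
  next
    case 3
    then have "c 1 \<noteq> c 2" using inj_onD[OF ic, of 1 2] by auto
    then consider "r 0 \<noteq> c 1" | "r 0 \<noteq> c 2" by metis
    then show ?thesis using shortcut_chord[OF cyc, of 1] shortcut_chord[OF cyc, of 2] 3
      by cases simp_all
  qed
qed

lemma shortcut_splits_flip:
  assumes G: "G \<in> Omega n d" and cyc: "alt_cycle G k r c" and "has_shortcut G k r c"
  obtains H where "H \<in> Omega n d" and "card (sym_diff G H) < 2 * k"
    and "card (sym_diff H (flip G k r c)) < 2 * k"
proof -
  obtain k' r' c' where cyc': "alt_cycle G k' r' c'" and "k' < k"
    and close: "card (sym_diff (cycle_arcs k' r' c') (cycle_arcs k r c)) < 2 * k"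
    using assms(3) unfolding has_shortcut_def by blast
  show ?thesis
  proof (rule that)
    show "flip G k' r' c' \<in> Omega n d" by (rule flip_in_Omega[OF G cyc'])
    show "card (sym_diff G (flip G k' r' c')) < 2 * k"
      using sym_diff_flip[OF cyc'] card_cycle_arcs[OF cyc'] \<open>k' < k\<close> by simp
    show "card (sym_diff (flip G k' r' c') (flip G k r c)) < 2 * k"
      using sym_diff_flips[OF cyc cyc'] close by simp
  qed
qed

lemma switch_descent:
  assumes n4: "4 \<le> n" and G: "G \<in> Omega n d" and G': "G' \<in> Omega n d"
  shows "reach n d G G' \<or> (\<exists>H\<in>Omega n d. card (sym_diff G H) < card (sym_diff G G') \<and>
           card (sym_diff H G') < card (sym_diff G G'))"
proof (cases "G = G'")
  case False
  obtain k r c where cyc: "alt_cycle G k r c"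
    and odd: "odd_arcs k r c \<subseteq> G - G'" and even: "even_arcs k r c \<subseteq> G' - G"
    using alt_cycle_in_sym_diff[OF G G' False] by blast
  have fin: "finite (sym_diff G G')"
    using Omega_finite[OF G] Omega_finite[OF G']  by simp
  have sub: "cycle_arcs k r c \<subseteq> sym_diff G G'" using odd even  by auto
  show ?thesis
  proof (cases "cycle_arcs k r c = sym_diff G G'")
    case True
    then have G': "G' = flip G k r c" using odd even  by auto
    have D: "card (sym_diff G G') = 2 * k" using True card_cycle_arcs[OF cyc] by simp
    from flip_reach_or_shortcut[OF G n4 cyc] show ?thesis
    proof
      assume "has_shortcut G k r c"
      then obtain H where "H \<in> Omega n d" "card (sym_diff G H) < 2 * k"
        "card (sym_diff H (flip G k r c)) < 2 * k"
        using shortcut_splits_flip[OF G cyc] by blast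
      then show ?thesis unfolding G' D[unfolded G'] by blast
    qed (simp add: G')
  next
    case False
    have "(r 0, c 0) \<in> cycle_arcs k r c"
      using cyc unfolding alt_cycle_def odd_arcs_def by auto
    then have "sym_diff (flip G k r c) G' \<subset> sym_diff G G'"
      using odd even  by auto
    moreover have "sym_diff G (flip G k r c) \<subset> sym_diff G G'"
      using sym_diff_flip[OF cyc] sub False by auto
    ultimately show ?thesis
      using flip_in_Omega[OF G cyc] psubset_card_mono[OF fin] by blast
  qed
qed simp

theorem mainTheorem5:
  fixes n d :: nat
  assumes "n \<ge> 4" and "1 \<le> d" and "d \<le> n - 1"
    and "G \<in> Omega n d" and "G' \<in> Omega n d"
  shows "(switch_in_Omega n d)\<^sup>*\<^sup>* G G'"
  using rtranclp_by_descent[where dist = "\<lambda>G G'. card (sym_diff G G')", OF switch_descent[OF assms(1)]]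
    assms(4,5) by blast

end
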